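(* Assume (A1)–(A3), let $p>0$, and let $g:[0,\infty)\to\mathbb{R}$ be a continuous function satisfying, for all $u>0$, \[ g(u)=\frac{\mu}{u^\gamma e^{-\alpha/u}}\int_0^u t^{\gamma-2}e^{-\alpha/t}\Big(p\,\bar F(t)+\int_0^t g(z)\bar F(t-z)\,dz\Big)dt. \] Then $g$ is bounded on $[0,\infty)$, i.e. $\sup_{u\ge0}|g(u)|<\infty$.
   Context: $\xi$ is a positive random variable with distribution function $F$, $\bar F=1-F$. Parameters: $\kappa\in(0,1]$, $a\in\mathbb{R}$, $r\ge0$, $\sigma>0$, $c>0$, $\lambda>0$, $\gamma=\dfrac{2((a-r)\kappa+r)}{\kappa^2\sigma^2}$, $\alpha=\dfrac{2c}{\kappa^2\sigma^2}$, $\mu=\dfrac{2\lambda}{\kappa^2\sigma^2}$. Assumptions: (A1) $F(0)=0$; (A2) there is $\varepsilon>0$ with $\mathbb{E}[\xi^\varepsilon]<\infty$; (A3) $\gamma>1$. *)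

theory Defs
  imports "HOL-Probability.Probability"
begin

definition Fdist :: "'a measure \<Rightarrow> ('a \<Rightarrow> real) \<Rightarrow> real \<Rightarrow> real" where
  "Fdist M \<xi> x = measure M {\<omega> \<in> space M. \<xi> \<omega> \<le> x}"

definition Fbar :: "'a measure \<Rightarrow> ('a \<Rightarrow> real) \<Rightarrow> real \<Rightarrow> real" where
  "Fbar M \<xi> x = 1 - Fdist M \<xi> x"

end

theory Submission imports Defs begin

text \<open>Let \<open>K\<close> be the maximum of \<open>\<bar>g\<bar>\<close> on \<open>[0, s]\<close>. In the convolution \<open>\<integral>\<^sub>0\<^sup>t g(z) Fbar(t - z) dz\<close>
only the last stretch of length \<open>T\<close> sees values of \<open>Fbar\<close> that are not below a small \<open>\<delta>\<close>,
so it is at most \<open>K (\<delta> t + T)\<close>. Integrating against \<open>t\<^sup>\<gamma>\<^sup>-\<^sup>2\<close> and dividing by \<open>s\<^sup>\<gamma>\<close> (here \<open>\<gamma> > 1\<close>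
is needed) gives \<open>\<bar>g s\<bar> \<le> P + K/2\<close> for all large \<open>s\<close>. Applied at a point where \<open>\<bar>g\<bar>\<close> attains its
maximum over \<open>[0, u]\<close>, this yields \<open>\<bar>g\<bar> \<le> 2 P\<close> there unless that point lies in a fixed compact
interval, on which \<open>g\<close> is bounded by continuity.\<close>

lemma abs_integral_le_with_small_head:
  fixes f :: "real \<Rightarrow> real"
  assumes "0 \<le> t" "0 \<le> M" "0 \<le> \<delta>" "0 \<le> T"
    and bound: "\<And>z. z \<in> {0..t} \<Longrightarrow> \<bar>f z\<bar> \<le> M"
    and head_bound: "\<And>z. z \<in> {0..t} \<Longrightarrow> z \<le> t - T \<Longrightarrow> \<bar>f z\<bar> \<le> M * \<delta>"
  shows "\<bar>integral {0..t} f\<bar> \<le> M * (\<delta> * t + T)"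
proof (cases "f integrable_on {0..t}")
  case False
  then show ?thesis using assms by (simp add: not_integrable_integral)
next
  case integrable: True
  show ?thesis
  proof (cases "t \<le> T")
    case True
    have "\<bar>integral {0..t} f\<bar> \<le> M * t"
      using has_integral_bound[of M f "integral {0..t} f" 0 t] integrable bound assms
      by (auto simp: integrable_integral)
    also have "\<dots> \<le> M * (\<delta> * t + T)"
      using True assms by (intro mult_left_mono) (auto intro: add_increasing)
    finally show ?thesis .
  next
    case False
    have "f integrable_on {0..t-T}" "f integrable_on {t-T..t}"
      using integrable False assms by (auto intro: integrable_subinterval_real)
    then have "\<bar>integral {0..t-T} f\<bar> \<le> (M * \<delta>) * (t - T)"
      and "\<bar>integral {t-T..t} f\<bar> \<le> M * T"
      using has_integral_bound[of "M * \<delta>" f "integral {0..t-T} f" 0 "t-T"]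
        has_integral_bound[of M f "integral {t-T..t} f" "t-T" t] bound head_bound assms False
      by (auto simp: integrable_integral)
    moreover have "integral {0..t} f = integral {0..t-T} f + integral {t-T..t} f"
      using Henstock_Kurzweil_Integration.integral_combine[of 0 "t-T" t f] integrable False assms by auto
    ultimately have "\<bar>integral {0..t} f\<bar> \<le> (M * \<delta>) * (t - T) + M * T"
      by linarith
    also have "\<dots> \<le> M * (\<delta> * t + T)"
      using assms by (simp add: algebra_simps)
    finally show ?thesis .
  qed
qed

lemma abs_integral_le_powr_bound:
  fixes f :: "real \<Rightarrow> real"
  assumes "0 \<le> s" "-1 < b" "0 \<le> c\<^sub>1" "0 \<le> c\<^sub>2"
    and bound: "\<And>t. t \<in> {0..s} \<Longrightarrow> \<bar>f t\<bar> \<le> c\<^sub>1 * t powr b + c\<^sub>2 * t powr (b + 1)"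
  shows "\<bar>integral {0..s} f\<bar> \<le> c\<^sub>1 * (s powr (b + 1) / (b + 1)) + c\<^sub>2 * (s powr (b + 2) / (b + 2))"
proof -
  have majorant: "((\<lambda>t. c\<^sub>1 * t powr b + c\<^sub>2 * t powr (b + 1)) has_integral
      c\<^sub>1 * (s powr (b + 1) / (b + 1)) + c\<^sub>2 * (s powr (b + 2) / (b + 2))) {0..s}"
    using has_integral_powr_from_0[of b s] has_integral_powr_from_0[of "b + 1" s] assms
    by (intro has_integral_add has_integral_mult_right) (auto simp: add.assoc)
  show ?thesis
  proof (cases "f integrable_on {0..s}")
    case False
    then show ?thesis
      using assms by (simp add: not_integrable_integral)
  next
    case True
    then show ?thesis
      using integral_norm_bound_integral[OF True has_integral_integrable[OF majorant]] bound
        integral_unique[OF majorant] by auto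
  qed
qed

lemma Fbar_nonneg: "prob_space M \<Longrightarrow> 0 \<le> Fbar M \<xi> x"
  unfolding Fbar_def Fdist_def by (simp add: prob_space.prob_le_1)

lemma Fbar_le_1: "prob_space M \<Longrightarrow> Fbar M \<xi> x \<le> 1"
  unfolding Fbar_def Fdist_def by simp

lemma Fdist_eq_cdf:
  assumes "\<xi> \<in> borel_measurable M"
  shows "Fdist M \<xi> x = cdf (distr M borel \<xi>) x"
proof -
  have "\<xi> -` {..x} \<inter> space M = {\<omega> \<in> space M. \<xi> \<omega> \<le> x}" by auto
  then show ?thesis
    unfolding cdf_def Fdist_def using assms by (simp add: measure_distr)
qed

lemma Fbar_tendsto_0:
  assumes "prob_space M" "\<xi> \<in> borel_measurable M"
  shows "(Fbar M \<xi> \<longlongrightarrow> 0) at_top"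
proof -
  have "real_distribution (distr M borel \<xi>)"
    using assms by (simp add: prob_space.real_distribution_distr)
  then have "(cdf (distr M borel \<xi>) \<longlongrightarrow> 1) at_top"
    by (rule real_distribution.cdf_lim_at_top_prob)
  moreover have "Fdist M \<xi> = cdf (distr M borel \<xi>)"
    using Fdist_eq_cdf[OF assms(2)] by (rule ext)
  ultimately have "(Fdist M \<xi> \<longlongrightarrow> 1) at_top" by simp
  from tendsto_diff[OF tendsto_const this, of 1] show ?thesis
    by (simp add: Fbar_def[abs_def])
qed

lemma divide_powr_mult_exp_le:
  fixes s \<alpha> \<mu> \<gamma> :: real
  assumes "1 \<le> s" "0 \<le> \<alpha>" "0 \<le> \<mu>"
  shows "\<mu> / (s powr \<gamma> * exp (- \<alpha> / s)) \<le> \<mu> * exp \<alpha> / s powr \<gamma>"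
proof -
  have "\<alpha> / s \<le> \<alpha>"
    using assms divide_left_mono[of 1 s \<alpha>] by simp
  then have "exp (\<alpha> / s) \<le> exp \<alpha>" by simp
  then have "\<mu> * exp (\<alpha> / s) / s powr \<gamma> \<le> \<mu> * exp \<alpha> / s powr \<gamma>"
    using assms by (intro divide_right_mono mult_left_mono) auto
  then show ?thesis
    by (simp add: exp_minus field_simps)
qed

lemma abs_renewal_integrand_le:
  fixes g F :: "real \<Rightarrow> real"
  assumes "0 \<le> t" "0 \<le> \<alpha>" "0 \<le> p" "0 \<le> \<delta>" "0 \<le> T" "0 \<le> K"
    and F_bounds: "\<And>x. 0 \<le> F x" "\<And>x. F x \<le> 1"
    and F_tail: "\<And>x. T \<le> x \<Longrightarrow> F x \<le> \<delta>"
    and g_le_K: "\<And>y. y \<in> {0..t} \<Longrightarrow> \<bar>g y\<bar> \<le> K"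
  shows "\<bar>t powr b * exp (- \<alpha> / t) * (p * F t + integral {0..t} (\<lambda>z. g z * F (t - z)))\<bar>
    \<le> (p + K * T) * t powr b + K * \<delta> * t powr (b + 1)"
proof -
  have "\<bar>integral {0..t} (\<lambda>z. g z * F (t - z))\<bar> \<le> K * (\<delta> * t + T)"
  proof (rule abs_integral_le_with_small_head)
    fix z assume "z \<in> {0..t}"
    then have "\<bar>g z\<bar> \<le> K" using g_le_K by auto
    then show "\<bar>g z * F (t - z)\<bar> \<le> K"
      and "z \<le> t - T \<Longrightarrow> \<bar>g z * F (t - z)\<bar> \<le> K * \<delta>"
      using F_bounds[of "t - z"] F_tail[of "t - z"] \<open>0 \<le> K\<close>
      by (auto simp: abs_mult intro: mult_mono' order.trans[OF mult_right_le_one_le])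
  qed (use assms in auto)
  moreover have "\<bar>p * F t\<bar> \<le> p"
    using F_bounds[of t] \<open>0 \<le> p\<close> by (simp add: abs_mult mult_left_le)
  ultimately have "\<bar>p * F t + integral {0..t} (\<lambda>z. g z * F (t - z))\<bar> \<le> (p + K * T) + K * \<delta> * t"
    by (simp add: algebra_simps)
  moreover have "exp (- \<alpha> / t) \<le> 1"
    using assms by simp
  ultimately have "\<bar>t powr b * exp (- \<alpha> / t) * (p * F t + integral {0..t} (\<lambda>z. g z * F (t - z)))\<bar>
      \<le> t powr b * 1 * ((p + K * T) + K * \<delta> * t)"
    unfolding abs_mult by (intro mult_mono) auto
  also have "\<dots> = (p + K * T) * t powr b + K * \<delta> * t powr (b + 1)"
    using \<open>0 \<le> t\<close> powr_add[of t b 1] by (cases "t = 0") (auto simp: algebra_simps)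
  finally show ?thesis .
qed

lemma renewal_solution_estimate:
  fixes g F :: "real \<Rightarrow> real"
  assumes "1 < \<gamma>" "0 \<le> \<alpha>" "0 \<le> \<mu>" "0 \<le> p" "0 \<le> \<delta>" "0 \<le> T" "0 \<le> K"
    and F_bounds: "\<And>x. 0 \<le> F x" "\<And>x. F x \<le> 1"
    and F_tail: "\<And>x. T \<le> x \<Longrightarrow> F x \<le> \<delta>"
    and small_tail: "4 * \<mu> * exp \<alpha> * \<delta> \<le> \<gamma>"
    and s_large: "1 \<le> s" "4 * \<mu> * exp \<alpha> * T \<le> (\<gamma> - 1) * s"
    and g_le_K: "\<And>y. y \<in> {0..s} \<Longrightarrow> \<bar>g y\<bar> \<le> K"
    and g_eq: "g s = \<mu> / (s powr \<gamma> * exp (- \<alpha> / s)) * integral {0..s} (\<lambda>t. t powr (\<gamma> - 2)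
        * exp (- \<alpha> / t) * (p * F t + integral {0..t} (\<lambda>z. g z * F (t - z))))"
  shows "\<bar>g s\<bar> \<le> \<mu> * exp \<alpha> * p / (\<gamma> - 1) + K / 2"
proof -
  define E where "E = \<mu> * exp \<alpha>"
  have "0 \<le> E" unfolding E_def using assms by simp
  have integrand_bound: "\<bar>t powr (\<gamma> - 2) * exp (- \<alpha> / t)
      * (p * F t + integral {0..t} (\<lambda>z. g z * F (t - z)))\<bar>
      \<le> (p + K * T) * t powr (\<gamma> - 2) + K * \<delta> * t powr (\<gamma> - 2 + 1)" if "t \<in> {0..s}" for t
    by (rule abs_renewal_integrand_le) (use that assms in auto)
  have "\<bar>g s\<bar> \<le> E / s powr \<gamma> * ((p + K * T) * (s powr (\<gamma> - 1) / (\<gamma> - 1))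
      + K * \<delta> * (s powr \<gamma> / \<gamma>))"
    unfolding g_eq abs_mult E_def
  proof (intro mult_mono)
    show "\<bar>\<mu> / (s powr \<gamma> * exp (- \<alpha> / s))\<bar> \<le> \<mu> * exp \<alpha> / s powr \<gamma>"
      using divide_powr_mult_exp_le[of s \<alpha> \<mu> \<gamma>] assms by simp
    show "\<bar>integral {0..s} (\<lambda>t. t powr (\<gamma> - 2) * exp (- \<alpha> / t)
        * (p * F t + integral {0..t} (\<lambda>z. g z * F (t - z))))\<bar>
        \<le> (p + K * T) * (s powr (\<gamma> - 1) / (\<gamma> - 1)) + K * \<delta> * (s powr \<gamma> / \<gamma>)"
      using abs_integral_le_powr_bound[of s "\<gamma> - 2" "p + K * T" "K * \<delta>", OF _ _ _ _ integrand_bound]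
        assms by (simp add: algebra_simps)
  qed (use assms in auto)
  also have "\<dots> = E * (p + K * T) / ((\<gamma> - 1) * s) + E * (K * \<delta>) / \<gamma>"
  proof -
    have "s powr \<gamma> = s powr (\<gamma> - 1) * s"
      using \<open>1 \<le> s\<close> powr_add[of s "\<gamma> - 1" 1] by simp
    then show ?thesis using \<open>1 < \<gamma>\<close> \<open>1 \<le> s\<close> by (simp add: field_simps)
  qed
  also have "\<dots> = E * p / ((\<gamma> - 1) * s) + K * (E * T / ((\<gamma> - 1) * s)) + K * (E * \<delta> / \<gamma>)"
    by (simp add: add_divide_distrib algebra_simps)
  also have "\<dots> \<le> E * p / (\<gamma> - 1) + K * (1 / 4) + K * (1 / 4)"
  proof (intro add_mono mult_left_mono)
    show "E * p / ((\<gamma> - 1) * s) \<le> E * p / (\<gamma> - 1)"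
      using assms \<open>0 \<le> E\<close> by (intro divide_left_mono) auto
    show "E * T / ((\<gamma> - 1) * s) \<le> 1 / 4" "E * \<delta> / \<gamma> \<le> 1 / 4"
      using s_large small_tail \<open>1 < \<gamma>\<close> unfolding E_def by (simp_all add: divide_simps)
  qed (use assms in auto)
  finally show ?thesis unfolding E_def by simp
qed

lemma bounded_image_atLeast_by_halving:
  fixes g :: "real \<Rightarrow> real"
  assumes cont: "continuous_on {0..} g"
    and halving: "\<And>s K. U < s \<Longrightarrow> 0 \<le> K \<Longrightarrow> (\<And>y. y \<in> {0..s} \<Longrightarrow> \<bar>g y\<bar> \<le> K)
      \<Longrightarrow> \<bar>g s\<bar> \<le> P + K / 2"
  shows "bounded (g ` {0..})"
proof -
  have cont_Icc: "continuous_on {0..u} g" for u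
    using cont by (rule continuous_on_subset) auto
  have "bounded (g ` {0..U})"
    by (intro compact_imp_bounded compact_continuous_image cont_Icc compact_Icc)
  then obtain C where C: "\<And>y. y \<in> {0..U} \<Longrightarrow> \<bar>g y\<bar> \<le> C"
    unfolding bounded_iff real_norm_def by blast
  have "\<bar>g u\<bar> \<le> max C (2 * P)" if "0 \<le> u" for u
  proof -
    obtain s where s: "s \<in> {0..u}" and s_max: "\<And>y. y \<in> {0..u} \<Longrightarrow> \<bar>g y\<bar> \<le> \<bar>g s\<bar>"
      using continuous_attains_sup[of "{0..u}" "\<lambda>x. \<bar>g x\<bar>"] continuous_on_rabs[OF cont_Icc] \<open>0 \<le> u\<close>
      by auto
    have "\<bar>g s\<bar> \<le> max C (2 * P)"
    proof (cases "s \<le> U")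
      case True
      then show ?thesis using C[of s] s by auto
    next
      case False
      have "\<bar>g s\<bar> \<le> P + \<bar>g s\<bar> / 2"
        by (rule halving) (use False s s_max in auto)
      then show ?thesis by simp
    qed
    then show ?thesis using s_max[of u] \<open>0 \<le> u\<close> by simp
  qed
  then show ?thesis unfolding bounded_iff by auto
qed

theorem lemma2:
  fixes M :: "'a measure" and \<xi> :: "'a \<Rightarrow> real"
    and \<kappa> a r \<sigma> c lam \<epsilon> p :: real and g :: "real \<Rightarrow> real"
  assumes "prob_space M"
    and "\<xi> \<in> borel_measurable M"
    and "AE \<omega> in M. \<xi> \<omega> > 0"
    and A1: "Fdist M \<xi> 0 = 0"
    and A2: "\<epsilon> > 0" "integrable M (\<lambda>\<omega>. \<xi> \<omega> powr \<epsilon>)"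
    and "0 < \<kappa>" "\<kappa> \<le> 1" "0 \<le> r" "0 < \<sigma>" "0 < c" "0 < lam"
    and A3: "2 * ((a - r) * \<kappa> + r) / (\<kappa>\<^sup>2 * \<sigma>\<^sup>2) > 1"
    and "p > 0"
    and "continuous_on {0..} g"
    and "\<forall>u>0. g u =
      (2 * lam / (\<kappa>\<^sup>2 * \<sigma>\<^sup>2)) /
        (u powr (2 * ((a - r) * \<kappa> + r) / (\<kappa>\<^sup>2 * \<sigma>\<^sup>2)) * exp (- (2 * c / (\<kappa>\<^sup>2 * \<sigma>\<^sup>2)) / u))
      * integral {0..u} (\<lambda>t. t powr (2 * ((a - r) * \<kappa> + r) / (\<kappa>\<^sup>2 * \<sigma>\<^sup>2) - 2)
            * exp (- (2 * c / (\<kappa>\<^sup>2 * \<sigma>\<^sup>2)) / t)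
            * (p * Fbar M \<xi> t + integral {0..t} (\<lambda>z. g z * Fbar M \<xi> (t - z))))"
  shows "bounded (g ` {0..})"
proof -
  define \<gamma> where "\<gamma> = 2 * ((a - r) * \<kappa> + r) / (\<kappa>\<^sup>2 * \<sigma>\<^sup>2)"
  define \<alpha> where "\<alpha> = 2 * c / (\<kappa>\<^sup>2 * \<sigma>\<^sup>2)"
  define \<mu> where "\<mu> = 2 * lam / (\<kappa>\<^sup>2 * \<sigma>\<^sup>2)"
  define E where "E = \<mu> * exp \<alpha>"
  have "0 < \<alpha>" "0 < \<mu>" "1 < \<gamma>"
    unfolding \<alpha>_def \<mu>_def \<gamma>_def using assms by auto
  then have "0 < \<gamma> / (4 * E)" unfolding E_def by simp
  then have "\<forall>\<^sub>F x in at_top. Fbar M \<xi> x < \<gamma> / (4 * E)"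
    by (rule order_tendstoD(2)[OF Fbar_tendsto_0[OF assms(1,2)]])
  then obtain N where N: "\<And>x. N \<le> x \<Longrightarrow> Fbar M \<xi> x < \<gamma> / (4 * E)"
    unfolding eventually_at_top_linorder by blast
  define T where "T = max N 0"
  have "0 \<le> T" and tail: "\<And>x. T \<le> x \<Longrightarrow> Fbar M \<xi> x \<le> \<gamma> / (4 * E)"
    unfolding T_def using N by (auto intro: less_imp_le)
  show ?thesis
  proof (rule bounded_image_atLeast_by_halving[OF \<open>continuous_on {0..} g\<close>])
    fix s K
    assume "max 1 (4 * E * T / (\<gamma> - 1)) < s" "0 \<le> K" "\<And>y. y \<in> {0..s} \<Longrightarrow> \<bar>g y\<bar> \<le> K"
    with assms(16) show "\<bar>g s\<bar> \<le> E * p / (\<gamma> - 1) + K / 2"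
      unfolding E_def \<gamma>_def[symmetric] \<alpha>_def[symmetric] \<mu>_def[symmetric]
      using renewal_solution_estimate[of \<gamma> \<alpha> \<mu> p "\<gamma> / (4 * E)" T K "Fbar M \<xi>" s g]
        tail \<open>0 \<le> T\<close> \<open>0 < \<alpha>\<close> \<open>0 < \<mu>\<close> \<open>1 < \<gamma>\<close> \<open>p > 0\<close> Fbar_nonneg[OF assms(1)] Fbar_le_1[OF assms(1)]
      by (auto simp: E_def field_simps)
  qed
qed

end
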